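(* Let $N$ firms have outputs $x_i\in K_i\subseteq[0,\infty)$, $K=\prod_iK_i$, $X=\sum_{i=1}^Nx_i$, let $b^*>0$, $\sigma>1$, and for a parameter $\theta=a\in\Theta$ define $F(x;\theta)$ by $F_i(x;\theta)=c_i'(x_i)-(\theta-b^*X^\sigma)+\sigma b^*X^{\sigma-1}x_i$. Suppose each $c_i$ is convex and continuously differentiable with $c_i'$ Lipschitz continuous on $K_i$, each $K_i$ is nonempty, closed, convex and bounded, $\Theta=[\delta,\Delta]$ with $0<\delta<\Delta$, and $X\ge\eta$ for some $\eta>0$ and all $x\in K$. If $N<\frac{3\sigma-1}{\sigma-1}$, then: (a) if $x(\theta)$ denotes the solution of VI$(K,F(\cdot;\theta))$, then $x(\theta)$ is Lipschitz continuous in $\theta$ on $\Theta$; (b) for $\epsilon>0$, if $x(\theta,\epsilon)$ denotes the solution of VI$(K,F(\cdot;\theta)+\epsilon\mathbf{I})$, then $x(\theta,\epsilon)$ is Lipschitz continuous in $\theta$ and $\epsilon$.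
   Context: VI$(K,G)$ asks for $x\in K$ with $(y-x)^TG(x)\ge0$ for all $y\in K$. $F(\cdot;\theta)+\epsilon\mathbf{I}$ denotes $x\mapsto F(x;\theta)+\epsilon x$. $F(\cdot;\theta)$ is the gradient map of the Cournot game with price $\theta-b^*X^\sigma$ in which firm $i$ minimizes $c_i(x_i)-(\theta-b^*X^\sigma)x_i$; here the intercept $a=\theta$ is the parameter. *)

theory Defs
  imports "HOL-Analysis.Analysis"
begin

definition solves_VI :: "('a::real_inner) set \<Rightarrow> ('a \<Rightarrow> 'a) \<Rightarrow> 'a \<Rightarrow> bool" where
  "solves_VI K G x \<longleftrightarrow> x \<in> K \<and> (\<forall>y\<in>K. (y - x) \<bullet> G x \<ge> 0)"

definition total_output :: "real ^ 'n \<Rightarrow> real" where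
  "total_output x = (\<Sum>i\<in>UNIV. x $ i)"

text \<open>Gradient map of the Cournot game with inverse demand theta - b X^sigma;
  dc i is the derivative c_i' of the cost function of firm i.\<close>
definition cournot_F ::
  "('n::finite \<Rightarrow> real \<Rightarrow> real) \<Rightarrow> real \<Rightarrow> real \<Rightarrow> real ^ 'n \<Rightarrow> real \<Rightarrow> real ^ 'n" where
  "cournot_F dc b \<sigma> x \<theta> =
     (\<chi> i. dc i (x $ i) - (\<theta> - b * total_output x powr \<sigma>)
            + \<sigma> * b * total_output x powr (\<sigma> - 1) * x $ i)"

definition prod_set :: "('n::finite \<Rightarrow> real set) \<Rightarrow> (real ^ 'n) set" where
  "prod_set Ks = {x. \<forall>i. x $ i \<in> Ks i}"

end

theory Submission
  imports Defs
begin

text \<open>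
  Take two solutions \<open>x\<close>, \<open>x'\<close>, ordered so that \<open>X \<le> X'\<close>. Adding the two variational inequalities
  coordinatewise gives \<open>(x'\<^sub>j - x\<^sub>j) (F\<^sub>j(x) - F\<^sub>j(x')) \<ge> 0\<close>. Convexity makes every \<open>c\<^sub>i'\<close>
  nondecreasing, and the price term \<open>b X\<^sup>\<sigma>\<close> and the slope \<open>\<sigma> b X\<^sup>\<sigma>\<^sup>-\<^sup>1 \<ge> \<sigma> b \<eta>\<^sup>\<sigma>\<^sup>-\<^sup>1\<close>
  increase with \<open>X\<close>. Hence, if some output rises, the price increase plus \<open>\<sigma> b \<eta>\<^sup>\<sigma>\<^sup>-\<^sup>1\<close>
  times that rise is at most \<open>R = |\<theta> - \<theta>'| + M |\<epsilon> - \<epsilon>'|\<close>, where \<open>M\<close> bounds the \<open>K\<^sub>i\<close>.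
  A fall of any output, times \<open>\<sigma> b \<eta>\<^sup>\<sigma>\<^sup>-\<^sup>1\<close>, is then at most \<open>(2 + \<sigma>) R\<close>, because the cross term
  \<open>(\<sigma> b X'\<^sup>\<sigma>\<^sup>-\<^sup>1 - \<sigma> b X\<^sup>\<sigma>\<^sup>-\<^sup>1) x'\<^sub>j\<close> is at most \<open>\<sigma>\<close> times the price increase. If no output
  rises, \<open>X \<le> X'\<close> forces \<open>x = x'\<close>.
\<close>

lemma convex_on_derivative_mono:
  fixes f f' :: "real \<Rightarrow> real"
  assumes deriv: "\<And>t. a \<le> t \<Longrightarrow> (f has_real_derivative f' t) (at t within {a..})"
    and cont: "continuous_on {a..} f'" and convex: "convex_on {a..} f"
    and "a \<le> s" "s \<le> t"
  shows "f' s \<le> f' t"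
proof -
  have interior_mono: "f' s \<le> f' t" if "a < s" "s < t" for s t
  proof -
    have "f t - f s \<ge> f' s * (t - s)"
      by (rule convex_on_imp_above_tangent[where A="{a..}"]) (use that deriv convex in auto)
    moreover have "f s - f t \<ge> f' t * (s - t)"
      by (rule convex_on_imp_above_tangent[where A="{a..}"]) (use that deriv convex in auto)
    ultimately have "(f' t - f' s) * (t - s) \<ge> 0" by (simp add: algebra_simps)
    with that show ?thesis by (simp add: zero_le_mult_iff)
  qed
  consider "s = t" | "a < s" "s < t" | "s = a" "a < t"
    using \<open>a \<le> s\<close> \<open>s \<le> t\<close> by linarith
  then show ?thesis
  proof cases
    case 3
    have "(f' \<longlongrightarrow> f' a) (at_right a)"
      using cont \<open>s = a\<close> by (auto simp: continuous_on_def intro: tendsto_within_subset)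
    moreover have "eventually (\<lambda>y. f' y \<le> f' t) (at_right a)"
      using eventually_at_right_real[OF \<open>a < t\<close>] by eventually_elim (auto intro: interior_mono)
    ultimately show ?thesis
      using \<open>s = a\<close> by (auto intro: tendsto_upperbound)
  qed (auto intro: interior_mono)
qed

lemma solves_VI_prod_set_coord_diff:
  fixes G G' :: "real^'n::finite \<Rightarrow> real^'n"
  assumes "solves_VI (prod_set Ks) G x" "solves_VI (prod_set Ks) G' x'"
  shows "(x'$j - x$j) * (G x $ j - G' x' $ j) \<ge> 0"
proof -
  have coord: "(t - y$j) * (H y $ j) \<ge> 0" if "solves_VI (prod_set Ks) H y" "t \<in> Ks j" for H y t
  proof -
    define z where "z = (\<chi> k. if k = j then t else y$k)"
    have "z \<in> prod_set Ks" using that unfolding solves_VI_def prod_set_def z_def by auto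
    with that have "(z - y) \<bullet> H y \<ge> 0" by (auto simp: solves_VI_def)
    moreover have "z - y = axis j (t - y$j)"
      by (simp add: vec_eq_iff axis_def z_def)
    ultimately show ?thesis by (simp add: inner_axis')
  qed
  have "x$j \<in> Ks j" "x'$j \<in> Ks j"
    using assms by (auto simp: solves_VI_def prod_set_def)
  with coord[OF assms(1)] coord[OF assms(2)] show ?thesis
    by (smt (verit, best) mult_minus_left right_diff_distrib')
qed

lemma powr_diff_mult_le:
  fixes X X' p :: real
  assumes "0 < X" "X \<le> X'"
  shows "(X' powr (p - 1) - X powr (p - 1)) * X' \<le> X' powr p - X powr p"
proof -
  have "X' powr (p - 1) * X' = X' powr p" "X powr (p - 1) * X = X powr p"
    using assms powr_add[of X' "p - 1" 1] powr_add[of X "p - 1" 1] by simp_all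
  moreover have "X powr (p - 1) * X \<le> X powr (p - 1) * X'"
    using assms by (intro mult_left_mono) auto
  ultimately show ?thesis by (simp add: algebra_simps)
qed

lemma cournot_F_plus_scaleR_nth:
  "(cournot_F dc b \<sigma> y \<theta> + \<epsilon> *\<^sub>R y) $ j =
     dc j (y$j) - \<theta> + b * total_output y powr \<sigma> + (\<sigma> * b * total_output y powr (\<sigma> - 1) + \<epsilon>) * y$j"
  by (simp add: cournot_F_def algebra_simps)

context
  fixes dc :: "'n::finite \<Rightarrow> real \<Rightarrow> real" and Ks :: "'n \<Rightarrow> real set"
    and b \<sigma> \<eta> M :: real
  assumes b_pos: "b > 0" and sigma_gt: "\<sigma> > 1" and eta_pos: "\<eta> > 0"
    and dc_mono: "\<And>i s t. 0 \<le> s \<Longrightarrow> s \<le> t \<Longrightarrow> dc i s \<le> dc i t"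
    and K_nonneg: "\<And>i. Ks i \<subseteq> {0..}"
    and total_output_ge: "\<And>x. x \<in> prod_set Ks \<Longrightarrow> total_output x \<ge> \<eta>"
    and K_abs_le: "\<And>i t. t \<in> Ks i \<Longrightarrow> \<bar>t\<bar> \<le> M"
begin

context
  fixes x x' :: "real^'n" and \<theta> \<theta>' \<epsilon> \<epsilon>' :: real
  assumes sol: "solves_VI (prod_set Ks) (\<lambda>x. cournot_F dc b \<sigma> x \<theta> + \<epsilon> *\<^sub>R x) x"
    and sol': "solves_VI (prod_set Ks) (\<lambda>x. cournot_F dc b \<sigma> x \<theta>' + \<epsilon>' *\<^sub>R x) x'"
    and eps_nonneg: "0 \<le> \<epsilon>"
    and total_output_le: "total_output x \<le> total_output x'"
begin

private lemma coords_in_K: "x$j \<in> Ks j" "x'$j \<in> Ks j"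
  using sol sol' by (auto simp: solves_VI_def prod_set_def)

private lemma coords_nonneg: "0 \<le> x$j" "0 \<le> x'$j"
  using coords_in_K K_nonneg by force+

private lemma eta_le_total_output: "\<eta> \<le> total_output x" "\<eta> \<le> total_output x'"
  using sol sol' total_output_ge by (auto simp: solves_VI_def)

private lemma price_term_mono: "b * total_output x powr \<sigma> \<le> b * total_output x' powr \<sigma>"
  using b_pos sigma_gt eta_pos eta_le_total_output total_output_le by (auto intro!: powr_mono2)

private lemma slope_bounds:
  "\<sigma> * b * \<eta> powr (\<sigma> - 1) \<le> \<sigma> * b * total_output x powr (\<sigma> - 1)"
  "\<sigma> * b * total_output x powr (\<sigma> - 1) \<le> \<sigma> * b * total_output x' powr (\<sigma> - 1)"
  using b_pos sigma_gt eta_pos eta_le_total_output total_output_le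
  by (auto intro!: mult_left_mono powr_mono2)

private lemma slope_increase_mult_le:
  "(\<sigma> * b * total_output x' powr (\<sigma> - 1) - \<sigma> * b * total_output x powr (\<sigma> - 1)) * x'$j
     \<le> \<sigma> * (b * total_output x' powr \<sigma> - b * total_output x powr \<sigma>)"
proof -
  have "x'$j \<le> total_output x'"
    unfolding total_output_def by (rule member_le_sum) (simp_all add: coords_nonneg)
  then have "(\<sigma> * b * total_output x' powr (\<sigma> - 1) - \<sigma> * b * total_output x powr (\<sigma> - 1)) * x'$j
      \<le> (\<sigma> * b * total_output x' powr (\<sigma> - 1) - \<sigma> * b * total_output x powr (\<sigma> - 1)) * total_output x'"
    using slope_bounds(2) by (intro mult_left_mono) auto
  also have "\<dots> = \<sigma> * b * ((total_output x' powr (\<sigma> - 1) - total_output x powr (\<sigma> - 1)) * total_output x')"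
    by (simp add: algebra_simps)
  also have "\<dots> \<le> \<sigma> * b * (total_output x' powr \<sigma> - total_output x powr \<sigma>)"
    using powr_diff_mult_le[OF _ total_output_le] eta_pos eta_le_total_output b_pos sigma_gt
    by (intro mult_left_mono) auto
  finally show ?thesis by (simp add: algebra_simps)
qed

lemma cournot_VI_coord_gap:
  "(x'$j - x$j) * ((dc j (x$j) - \<theta> + b * total_output x powr \<sigma> + (\<sigma> * b * total_output x powr (\<sigma> - 1) + \<epsilon>) * x$j)
     - (dc j (x'$j) - \<theta>' + b * total_output x' powr \<sigma> + (\<sigma> * b * total_output x' powr (\<sigma> - 1) + \<epsilon>') * x'$j)) \<ge> 0"
  using solves_VI_prod_set_coord_diff[OF sol sol', of j] unfolding cournot_F_plus_scaleR_nth .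

private lemma eps_term_le: "\<bar>(\<epsilon>' - \<epsilon>) * x'$j\<bar> \<le> M * \<bar>\<epsilon>' - \<epsilon>\<bar>"
  using mult_left_mono[OF K_abs_le[OF coords_in_K(2)], of "\<bar>\<epsilon>' - \<epsilon>\<bar>"]
  by (simp add: abs_mult mult.commute)

lemma cournot_VI_increasing_coord:
  assumes "x$j < x'$j"
  shows "(b * total_output x' powr \<sigma> - b * total_output x powr \<sigma>)
           + \<sigma> * b * \<eta> powr (\<sigma> - 1) * (x'$j - x$j) \<le> \<bar>\<theta>' - \<theta>\<bar> + M * \<bar>\<epsilon>' - \<epsilon>\<bar>"
proof -
  define P P' Q Q' Q\<^sub>0 where "P = b * total_output x powr \<sigma>" and "P' = b * total_output x' powr \<sigma>"
    and "Q = \<sigma> * b * total_output x powr (\<sigma> - 1)" and "Q' = \<sigma> * b * total_output x' powr (\<sigma> - 1)"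
    and "Q\<^sub>0 = \<sigma> * b * \<eta> powr (\<sigma> - 1)"
  have "0 \<le> (dc j (x$j) - \<theta> + P + (Q + \<epsilon>) * x$j) - (dc j (x'$j) - \<theta>' + P' + (Q' + \<epsilon>') * x'$j)"
    using cournot_VI_coord_gap[of j] assms unfolding P_def P'_def Q_def Q'_def
    by (simp only: zero_le_mult_iff) linarith
  then have gap: "P' - P + Q' * x'$j - Q * x$j \<le> dc j (x$j) - dc j (x'$j) + (\<theta>' - \<theta>) + \<epsilon> * x$j - \<epsilon>' * x'$j"
    by (simp add: algebra_simps)
  have "dc j (x$j) \<le> dc j (x'$j)" using dc_mono coords_nonneg assms by simp
  moreover have "Q\<^sub>0 * (x'$j - x$j) \<le> Q * x'$j - Q * x$j"
    using slope_bounds(1) assms by (simp add: Q_def Q\<^sub>0_def mult_right_mono flip: right_diff_distrib)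
  moreover have "Q * x'$j \<le> Q' * x'$j"
    using slope_bounds(2) coords_nonneg by (simp add: Q_def Q'_def mult_right_mono)
  moreover have "\<epsilon> * x$j \<le> \<epsilon> * x'$j" using eps_nonneg assms by (simp add: mult_left_mono)
  moreover have "\<epsilon> * x'$j - \<epsilon>' * x'$j \<le> M * \<bar>\<epsilon>' - \<epsilon>\<bar>"
    using eps_term_le[of j] by (simp add: left_diff_distrib abs_le_iff)
  ultimately show ?thesis
    using gap unfolding P_def[symmetric] P'_def[symmetric] Q\<^sub>0_def[symmetric] by linarith
qed

lemma cournot_VI_decreasing_coord:
  assumes "x'$j < x$j"
  shows "\<sigma> * b * \<eta> powr (\<sigma> - 1) * (x$j - x'$j)
           \<le> \<bar>\<theta>' - \<theta>\<bar> + M * \<bar>\<epsilon>' - \<epsilon>\<bar> + (1 + \<sigma>) * (b * total_output x' powr \<sigma> - b * total_output x powr \<sigma>)"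
proof -
  define P P' Q Q' Q\<^sub>0 where "P = b * total_output x powr \<sigma>" and "P' = b * total_output x' powr \<sigma>"
    and "Q = \<sigma> * b * total_output x powr (\<sigma> - 1)" and "Q' = \<sigma> * b * total_output x' powr (\<sigma> - 1)"
    and "Q\<^sub>0 = \<sigma> * b * \<eta> powr (\<sigma> - 1)"
  have "(dc j (x$j) - \<theta> + P + (Q + \<epsilon>) * x$j) - (dc j (x'$j) - \<theta>' + P' + (Q' + \<epsilon>') * x'$j) \<le> 0"
    using cournot_VI_coord_gap[of j] assms unfolding P_def P'_def Q_def Q'_def
    by (simp only: zero_le_mult_iff) linarith
  then have gap: "Q * x$j - Q * x'$j \<le> dc j (x'$j) - dc j (x$j) + (\<theta> - \<theta>') + (P' - P)
                    + (Q' * x'$j - Q * x'$j) + \<epsilon>' * x'$j - \<epsilon> * x$j"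
    by (simp add: algebra_simps)
  have cross: "Q' * x'$j - Q * x'$j \<le> \<sigma> * P' - \<sigma> * P"
    using slope_increase_mult_le[of j] unfolding P_def P'_def Q_def Q'_def
    by (simp add: algebra_simps)
  have "dc j (x'$j) \<le> dc j (x$j)" using dc_mono coords_nonneg assms by simp
  moreover have "Q\<^sub>0 * (x$j - x'$j) \<le> Q * x$j - Q * x'$j"
    using slope_bounds(1) assms by (simp add: Q_def Q\<^sub>0_def mult_right_mono flip: right_diff_distrib)
  moreover have "\<epsilon> * x'$j \<le> \<epsilon> * x$j" using eps_nonneg assms by (simp add: mult_left_mono)
  moreover have "\<epsilon>' * x'$j - \<epsilon> * x'$j \<le> M * \<bar>\<epsilon>' - \<epsilon>\<bar>"
    using eps_term_le[of j] by (simp add: left_diff_distrib abs_le_iff)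
  moreover have "(1 + \<sigma>) * (P' - P) = P' - P + (\<sigma> * P' - \<sigma> * P)"
    by (simp add: algebra_simps)
  ultimately show ?thesis
    using gap cross unfolding P_def[symmetric] P'_def[symmetric] Q\<^sub>0_def[symmetric] by linarith
qed

lemma cournot_VI_coord_bound:
  "\<sigma> * b * \<eta> powr (\<sigma> - 1) * \<bar>x'$j - x$j\<bar> \<le> (2 + \<sigma>) * (\<bar>\<theta>' - \<theta>\<bar> + M * \<bar>\<epsilon>' - \<epsilon>\<bar>)"
proof -
  define R where "R = \<bar>\<theta>' - \<theta>\<bar> + M * \<bar>\<epsilon>' - \<epsilon>\<bar>"
  have "0 \<le> M" using K_abs_le[OF coords_in_K(1)] by (meson abs_ge_zero order_trans)
  then have "0 \<le> R" unfolding R_def by simp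
  with sigma_gt have "R \<le> (2 + \<sigma>) * R" by (simp add: algebra_simps)
  show ?thesis
  proof (cases "\<exists>k. x$k < x'$k")
    case True
    then obtain k where "x$k < x'$k" by blast
    then have "0 < \<sigma> * b * \<eta> powr (\<sigma> - 1) * (x'$k - x$k)"
      using b_pos sigma_gt eta_pos by simp
    with cournot_VI_increasing_coord[OF \<open>x$k < x'$k\<close>]
    have price_le: "b * total_output x' powr \<sigma> - b * total_output x powr \<sigma> \<le> R"
      unfolding R_def by linarith
    consider "x$j < x'$j" | "x'$j < x$j" | "x$j = x'$j" by linarith
    then show ?thesis
    proof cases
      case 1
      with cournot_VI_increasing_coord[OF 1] price_term_mono \<open>R \<le> (2 + \<sigma>) * R\<close> show ?thesis
        unfolding R_def[symmetric] by simp
    next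
      case 2
      have "(1 + \<sigma>) * (b * total_output x' powr \<sigma> - b * total_output x powr \<sigma>) \<le> (1 + \<sigma>) * R"
        using price_le sigma_gt by (intro mult_left_mono) auto
      moreover have "(2 + \<sigma>) * R = R + (1 + \<sigma>) * R" by (simp add: algebra_simps)
      ultimately show ?thesis
        using cournot_VI_decreasing_coord[OF 2] 2 unfolding R_def[symmetric] by simp
    qed (use \<open>0 \<le> R\<close> \<open>R \<le> (2 + \<sigma>) * R\<close> in \<open>simp flip: R_def\<close>)
  next
    case False
    have "x'$j = x$j"
    proof (rule ccontr)
      assume "x'$j \<noteq> x$j"
      have le: "x'$k \<le> x$k" for k using False by (auto simp: not_less)
      with \<open>x'$j \<noteq> x$j\<close> have "x'$j < x$j" by (simp add: order_le_neq_trans)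
      with le have "(\<Sum>k\<in>UNIV. x'$k) < (\<Sum>k\<in>UNIV. x$k)"
        by (intro sum_strict_mono_ex1) auto
      with total_output_le show False by (simp add: total_output_def)
    qed
    then show ?thesis using \<open>0 \<le> R\<close> \<open>R \<le> (2 + \<sigma>) * R\<close> by (simp flip: R_def)
  qed
qed

end

lemma cournot_VI_solutions_dist_le:
  assumes "0 \<le> \<epsilon>\<^sub>1" "0 \<le> \<epsilon>\<^sub>2"
    and sol1: "solves_VI (prod_set Ks) (\<lambda>x. cournot_F dc b \<sigma> x \<theta>\<^sub>1 + \<epsilon>\<^sub>1 *\<^sub>R x) x\<^sub>1"
    and sol2: "solves_VI (prod_set Ks) (\<lambda>x. cournot_F dc b \<sigma> x \<theta>\<^sub>2 + \<epsilon>\<^sub>2 *\<^sub>R x) x\<^sub>2"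
  shows "norm (x\<^sub>1 - x\<^sub>2) \<le> real CARD('n) * (2 + \<sigma>) / (\<sigma> * b * \<eta> powr (\<sigma> - 1))
                             * (\<bar>\<theta>\<^sub>1 - \<theta>\<^sub>2\<bar> + M * \<bar>\<epsilon>\<^sub>1 - \<epsilon>\<^sub>2\<bar>)"
proof -
  define Q\<^sub>0 R where "Q\<^sub>0 = \<sigma> * b * \<eta> powr (\<sigma> - 1)" and "R = \<bar>\<theta>\<^sub>1 - \<theta>\<^sub>2\<bar> + M * \<bar>\<epsilon>\<^sub>1 - \<epsilon>\<^sub>2\<bar>"
  have "Q\<^sub>0 > 0" unfolding Q\<^sub>0_def using b_pos sigma_gt eta_pos by simp
  have "Q\<^sub>0 * \<bar>(x\<^sub>1 - x\<^sub>2)$i\<bar> \<le> (2 + \<sigma>) * R" for i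
  proof (cases "total_output x\<^sub>1 \<le> total_output x\<^sub>2")
    case True
    from cournot_VI_coord_bound[OF sol1 sol2 \<open>0 \<le> \<epsilon>\<^sub>1\<close> True] show ?thesis
      unfolding Q\<^sub>0_def R_def by (simp add: abs_minus_commute)
  next
    case False
    then have "total_output x\<^sub>2 \<le> total_output x\<^sub>1" by simp
    from cournot_VI_coord_bound[OF sol2 sol1 \<open>0 \<le> \<epsilon>\<^sub>2\<close> this] show ?thesis
      unfolding Q\<^sub>0_def R_def by simp
  qed
  then have coord: "\<bar>(x\<^sub>1 - x\<^sub>2)$i\<bar> \<le> (2 + \<sigma>) * R / Q\<^sub>0" for i
    using \<open>Q\<^sub>0 > 0\<close> by (simp add: pos_le_divide_eq mult.commute)
  have "norm (x\<^sub>1 - x\<^sub>2) \<le> (\<Sum>i\<in>UNIV. \<bar>(x\<^sub>1 - x\<^sub>2)$i\<bar>)" by (rule norm_le_l1_cart)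
  also have "\<dots> \<le> (\<Sum>i\<in>(UNIV::'n set). (2 + \<sigma>) * R / Q\<^sub>0)" by (rule sum_mono) (rule coord)
  finally show ?thesis unfolding Q\<^sub>0_def R_def by simp
qed

end

theorem proposition4:
  fixes c dc :: "'n::finite \<Rightarrow> real \<Rightarrow> real"
    and Ks :: "'n \<Rightarrow> real set"
    and b \<sigma> \<delta> \<Delta> \<eta> :: real
  assumes b_pos: "b > 0"
    and sigma_gt: "\<sigma> > 1"
    and c_deriv: "\<And>i t. t \<ge> 0 \<Longrightarrow> (c i has_real_derivative dc i t) (at t within {0..})"
    and dc_cont: "\<And>i. continuous_on {0..} (dc i)"
    and c_convex: "\<And>i. convex_on {0..} (c i)"
    and dc_lip: "\<And>i. \<exists>L. L-lipschitz_on (Ks i) (dc i)"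
    and K_sub: "\<And>i. Ks i \<subseteq> {0..}"
    and K_ne: "\<And>i. Ks i \<noteq> {}"
    and K_closed: "\<And>i. closed (Ks i)"
    and K_convex: "\<And>i. convex (Ks i)"
    and K_bounded: "\<And>i. bounded (Ks i)"
    and delta: "0 < \<delta>" "\<delta> < \<Delta>"
    and eta_pos: "\<eta> > 0"
    and X_ge: "\<And>x. x \<in> prod_set Ks \<Longrightarrow> total_output x \<ge> \<eta>"
    and N_bound: "real CARD('n) < (3 * \<sigma> - 1) / (\<sigma> - 1)"
  shows "(\<exists>L. \<forall>\<theta>1\<in>{\<delta>..\<Delta>}. \<forall>\<theta>2\<in>{\<delta>..\<Delta>}. \<forall>x1 x2.
            solves_VI (prod_set Ks) (\<lambda>x. cournot_F dc b \<sigma> x \<theta>1) x1 \<longrightarrow>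
            solves_VI (prod_set Ks) (\<lambda>x. cournot_F dc b \<sigma> x \<theta>2) x2 \<longrightarrow>
            norm (x1 - x2) \<le> L * \<bar>\<theta>1 - \<theta>2\<bar>)
       \<and> (\<exists>L. \<forall>\<theta>1\<in>{\<delta>..\<Delta>}. \<forall>\<theta>2\<in>{\<delta>..\<Delta>}. \<forall>\<epsilon>1>0. \<forall>\<epsilon>2>0. \<forall>x1 x2.
            solves_VI (prod_set Ks) (\<lambda>x. cournot_F dc b \<sigma> x \<theta>1 + \<epsilon>1 *\<^sub>R x) x1 \<longrightarrow>
            solves_VI (prod_set Ks) (\<lambda>x. cournot_F dc b \<sigma> x \<theta>2 + \<epsilon>2 *\<^sub>R x) x2 \<longrightarrow>
            norm (x1 - x2) \<le> L * (\<bar>\<theta>1 - \<theta>2\<bar> + \<bar>\<epsilon>1 - \<epsilon>2\<bar>))"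
proof -
  have dc_mono: "dc i s \<le> dc i t" if "0 \<le> s" "s \<le> t" for i s t
    using convex_on_derivative_mono[OF c_deriv dc_cont c_convex that] by simp
  have "bounded (\<Union>i. Ks i)" using K_bounded by (intro bounded_UN) auto
  then obtain M where M: "\<And>i t. t \<in> Ks i \<Longrightarrow> \<bar>t\<bar> \<le> M"
    unfolding bounded_iff by (metis UN_I UNIV_I real_norm_def)
  then have "M \<ge> 0" using K_ne by (meson abs_ge_zero all_not_in_conv order_trans)
  define C where "C = real CARD('n) * (2 + \<sigma>) / (\<sigma> * b * \<eta> powr (\<sigma> - 1))"
  have "C \<ge> 0" unfolding C_def using b_pos sigma_gt eta_pos by simp
  note dist_le = cournot_VI_solutions_dist_le[OF b_pos sigma_gt eta_pos dc_mono K_sub X_ge M,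
      folded C_def]
  have weaken: "C * (\<bar>u\<bar> + M * \<bar>v\<bar>) \<le> C * (1 + M) * (\<bar>u\<bar> + \<bar>v\<bar>)" for u v :: real
    using \<open>C \<ge> 0\<close> \<open>M \<ge> 0\<close> by (simp add: algebra_simps mult_left_mono)
  show ?thesis
    by (intro conjI exI[of _ C] exI[of _ "C * (1 + M)"] ballI allI impI)
      (auto intro: dist_le[where ?\<epsilon>\<^sub>1 = 0 and ?\<epsilon>\<^sub>2 = 0, simplified] order_trans[OF dist_le weaken])
qed

end
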